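(* A conditional frame $(X,\leq,\mathcal{R})$ validates $\mathsf{iCC}=\mathsf{ICK}\oplus(p\mathrel{\Box\!\!\!\rightarrow} p)\oplus(((p\mathrel{\Box\!\!\!\rightarrow} q)\wedge((p\wedge q)\mathrel{\Box\!\!\!\rightarrow} r))\to(p\mathrel{\Box\!\!\!\rightarrow} r))\oplus(((p\mathrel{\Box\!\!\!\rightarrow} q)\wedge(p\mathrel{\Box\!\!\!\rightarrow} r))\to((p\wedge q)\mathrel{\Box\!\!\!\rightarrow} r))$ if and only if for all $x\in X$ and upsets $a,b$: (i) $R_a[x]\subseteq a$; and (ii) $R_a[x]\subseteq b\subseteq a$ implies ${\uparrow}R_a[x]={\uparrow}R_b[x]$.
   Context: Formulas: $\phi ::= p\mid\bot\mid\phi\wedge\phi\mid\phi\vee\phi\mid\phi\to\phi\mid\phi\mathrel{\Box\!\!\!\rightarrow}\phi$. $\mathsf{ICK}\oplus\Gamma$ is the smallest set containing intuitionistic propositional logic, $\Gamma$, $(p\mathrel{\Box\!\!\!\rightarrow}(q\wedge r))\leftrightarrow((p\mathrel{\Box\!\!\!\rightarrow} q)\wedge(p\mathrel{\Box\!\!\!\rightarrow} r))$ and $(p\mathrel{\Box\!\!\!\rightarrow}\top)\leftrightarrow\top$, closed under uniform substitution, modus ponens and congruence rules for both arguments of $\mathrel{\Box\!\!\!\rightarrow}$. A conditional frame is $(X,\leq,\mathcal{R})$, $(X,\leq)$ a nonempty preorder, $\mathcal{R}=\{R_a\mid a\text{ an upset}\}$ with $(\leq\circ R_a)\subseteq(R_a\circ\leq)$;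 valuations assign upsets to letters and $x\models\phi\mathrel{\Box\!\!\!\rightarrow}\psi$ iff every $y$ with $xR_{V(\phi)}y$ satisfies $\psi$. *)

theory Defs
  imports Main
begin

datatype form =
    Var nat
  | Bot
  | And form form
  | Or form form
  | Imp form form
  | Cond form form

definition Top :: form where "Top = Imp Bot Bot"
definition Iff :: "form \<Rightarrow> form \<Rightarrow> form" where
  "Iff a b = And (Imp a b) (Imp b a)"

primrec subst :: "(nat \<Rightarrow> form) \<Rightarrow> form \<Rightarrow> form" where
  "subst s (Var n) = s n"
| "subst s Bot = Bot"
| "subst s (And a b) = And (subst s a) (subst s b)"
| "subst s (Or a b) = Or (subst s a) (subst s b)"
| "subst s (Imp a b) = Imp (subst s a) (subst s b)"
| "subst s (Cond a b) = Cond (subst s a) (subst s b)"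

abbreviation "pP \<equiv> Var 0"
abbreviation "pQ \<equiv> Var 1"
abbreviation "pR \<equiv> Var 2"

inductive ipc_axiom :: "form \<Rightarrow> bool" where
  "ipc_axiom (Imp a (Imp b a))"
| "ipc_axiom (Imp (Imp a (Imp b c)) (Imp (Imp a b) (Imp a c)))"
| "ipc_axiom (Imp (And a b) a)"
| "ipc_axiom (Imp (And a b) b)"
| "ipc_axiom (Imp a (Imp b (And a b)))"
| "ipc_axiom (Imp a (Or a b))"
| "ipc_axiom (Imp b (Or a b))"
| "ipc_axiom (Imp (Imp a c) (Imp (Imp b c) (Imp (Or a b) c)))"
| "ipc_axiom (Imp Bot a)"

inductive_set ICK :: "form set \<Rightarrow> form set" for G :: "form set" where
  ipc: "ipc_axiom a \<Longrightarrow> a \<in> ICK G"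
| extra: "a \<in> G \<Longrightarrow> a \<in> ICK G"
| conj_ax: "Iff (Cond pP (And pQ pR)) (And (Cond pP pQ) (Cond pP pR)) \<in> ICK G"
| top_ax: "Iff (Cond pP Top) Top \<in> ICK G"
| us: "a \<in> ICK G \<Longrightarrow> subst s a \<in> ICK G"
| mp: "Imp a b \<in> ICK G \<Longrightarrow> a \<in> ICK G \<Longrightarrow> b \<in> ICK G"
| cong_l: "Iff a b \<in> ICK G \<Longrightarrow> Iff (Cond a c) (Cond b c) \<in> ICK G"
| cong_r: "Iff a b \<in> ICK G \<Longrightarrow> Iff (Cond c a) (Cond c b) \<in> ICK G"

definition iCC_axioms :: "form set" where
  "iCC_axioms = {
     Cond pP pP,
     Imp (And (Cond pP pQ) (Cond (And pP pQ) pR)) (Cond pP pR),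
     Imp (And (Cond pP pQ) (Cond pP pR)) (Cond (And pP pQ) pR)}"

definition iCC :: "form set" where "iCC = ICK iCC_axioms"

definition upset :: "'w set \<Rightarrow> ('w \<Rightarrow> 'w \<Rightarrow> bool) \<Rightarrow> 'w set \<Rightarrow> bool" where
  "upset X le a \<longleftrightarrow> a \<subseteq> X \<and> (\<forall>x\<in>a. \<forall>y\<in>X. le x y \<longrightarrow> y \<in> a)"

definition up :: "'w set \<Rightarrow> ('w \<Rightarrow> 'w \<Rightarrow> bool) \<Rightarrow> 'w set \<Rightarrow> 'w set" where
  "up X le S = {y \<in> X. \<exists>s\<in>S. le s y}"

definition cond_frame ::
  "'w set \<Rightarrow> ('w \<Rightarrow> 'w \<Rightarrow> bool) \<Rightarrow> ('w set \<Rightarrow> ('w \<times> 'w) set) \<Rightarrow> bool" where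
  "cond_frame X le R \<longleftrightarrow>
     X \<noteq> {} \<and>
     (\<forall>x\<in>X. le x x) \<and>
     (\<forall>x\<in>X. \<forall>y\<in>X. \<forall>z\<in>X. le x y \<longrightarrow> le y z \<longrightarrow> le x z) \<and>
     (\<forall>a. upset X le a \<longrightarrow>
        R a \<subseteq> X \<times> X \<and>
        (\<forall>x y z. x \<in> X \<longrightarrow> le x y \<longrightarrow> (y, z) \<in> R a \<longrightarrow>
           (\<exists>w. (x, w) \<in> R a \<and> le w z)))"

primrec sat ::
  "'w set \<Rightarrow> ('w \<Rightarrow> 'w \<Rightarrow> bool) \<Rightarrow> ('w set \<Rightarrow> ('w \<times> 'w) set) \<Rightarrow> (nat \<Rightarrow> 'w set)
     \<Rightarrow> form \<Rightarrow> 'w \<Rightarrow> bool" where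
  "sat X le R V (Var n) x = (x \<in> V n)"
| "sat X le R V Bot x = False"
| "sat X le R V (And a b) x = (sat X le R V a x \<and> sat X le R V b x)"
| "sat X le R V (Or a b) x = (sat X le R V a x \<or> sat X le R V b x)"
| "sat X le R V (Imp a b) x =
     (\<forall>y\<in>X. le x y \<longrightarrow> sat X le R V a y \<longrightarrow> sat X le R V b y)"
| "sat X le R V (Cond a b) x =
     (\<forall>y. (x, y) \<in> R {z \<in> X. sat X le R V a z} \<longrightarrow> sat X le R V b y)"

definition frame_valid ::
  "'w set \<Rightarrow> ('w \<Rightarrow> 'w \<Rightarrow> bool) \<Rightarrow> ('w set \<Rightarrow> ('w \<times> 'w) set) \<Rightarrow> form \<Rightarrow> bool" where
  "frame_valid X le R f \<longleftrightarrow>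
     (\<forall>V. (\<forall>n. upset X le (V n)) \<longrightarrow> (\<forall>x\<in>X. sat X le R V f x))"

definition validates ::
  "'w set \<Rightarrow> ('w \<Rightarrow> 'w \<Rightarrow> bool) \<Rightarrow> ('w set \<Rightarrow> ('w \<times> 'w) set) \<Rightarrow> form set \<Rightarrow> bool" where
  "validates X le R L \<longleftrightarrow> (\<forall>f\<in>L. frame_valid X le R f)"

end

theory Submission
  imports Defs
begin

text \<open>Every conditional frame validates ICK: truth sets are upsets (persistence uses the
  condition that le followed by R a is contained in R a followed by le), substitution is a
  change of valuation, and the congruence rules hold because a conditional only sees the truth
  set of its antecedent. So a frame validates iCC iff it validates the three extra axioms.
  Reading p, q, r as arbitrary upsets a, b, c, these say that R a [x] is contained in a, and
  that whenever R a [x] is contained in b, the sets R a [x] and R (a \<inter> b) [x] lie below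
  the same upsets. Two sets have the same upward closure iff they lie below the same upsets,
  and R a [x] \<subseteq> b \<subseteq> a forces a \<inter> b = b, which turns the last condition into (ii).\<close>

abbreviation valuation :: "'w set \<Rightarrow> ('w \<Rightarrow> 'w \<Rightarrow> bool) \<Rightarrow> (nat \<Rightarrow> 'w set) \<Rightarrow> bool" where
  "valuation X le V \<equiv> \<forall>n. upset X le (V n)"

abbreviation truth_set ::
  "'w set \<Rightarrow> ('w \<Rightarrow> 'w \<Rightarrow> bool) \<Rightarrow> ('w set \<Rightarrow> ('w \<times> 'w) set) \<Rightarrow> (nat \<Rightarrow> 'w set)
     \<Rightarrow> form \<Rightarrow> 'w set" where
  "truth_set X le R V f \<equiv> {z \<in> X. sat X le R V f z}"

lemma cond_frame_reflp_on: "cond_frame X le R \<Longrightarrow> reflp_on X le"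
  unfolding cond_frame_def reflp_on_def by blast

lemma cond_frame_transp_on: "cond_frame X le R \<Longrightarrow> transp_on X le"
  unfolding cond_frame_def transp_on_def by blast

lemma cond_frame_R_subset: "cond_frame X le R \<Longrightarrow> upset X le a \<Longrightarrow> R a \<subseteq> X \<times> X"
  unfolding cond_frame_def by blast

lemma cond_frame_R_back:
  "cond_frame X le R \<Longrightarrow> upset X le a \<Longrightarrow> x \<in> X \<Longrightarrow> le x y \<Longrightarrow> (y, z) \<in> R a \<Longrightarrow>
     \<exists>w. (x, w) \<in> R a \<and> le w z"
  unfolding cond_frame_def by blast

lemma upset_subset: "upset X le a \<Longrightarrow> a \<subseteq> X"
  unfolding upset_def by blast

lemma upset_Int: "upset X le a \<Longrightarrow> upset X le b \<Longrightarrow> upset X le (a \<inter> b)"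
  unfolding upset_def by blast

lemma upset_up: "transp_on X le \<Longrightarrow> S \<subseteq> X \<Longrightarrow> upset X le (up X le S)"
  unfolding upset_def up_def transp_on_def by blast

lemma subset_up: "reflp_on X le \<Longrightarrow> S \<subseteq> X \<Longrightarrow> S \<subseteq> up X le S"
  unfolding up_def reflp_on_def by blast

lemma up_subset_upset_iff:
  "reflp_on X le \<Longrightarrow> upset X le c \<Longrightarrow> S \<subseteq> X \<Longrightarrow> up X le S \<subseteq> c \<longleftrightarrow> S \<subseteq> c"
  unfolding up_def upset_def reflp_on_def by blast

lemma up_subset_up_iff:
  assumes refl: "reflp_on X le" and trans: "transp_on X le" and S: "S \<subseteq> X" and T: "T \<subseteq> X"
  shows "up X le S \<subseteq> up X le T \<longleftrightarrow> (\<forall>c. upset X le c \<longrightarrow> T \<subseteq> c \<longrightarrow> S \<subseteq> c)"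
proof
  assume "up X le S \<subseteq> up X le T"
  then show "\<forall>c. upset X le c \<longrightarrow> T \<subseteq> c \<longrightarrow> S \<subseteq> c"
    using subset_up[OF refl S] up_subset_upset_iff[OF refl _ T] by blast
next
  assume "\<forall>c. upset X le c \<longrightarrow> T \<subseteq> c \<longrightarrow> S \<subseteq> c"
  then have "S \<subseteq> up X le T" using upset_up[OF trans T] subset_up[OF refl T] by blast
  then show "up X le S \<subseteq> up X le T" using up_subset_upset_iff[OF refl upset_up[OF trans T] S] by blast
qed

lemma up_eq_iff:
  assumes "reflp_on X le" and "transp_on X le" and "S \<subseteq> X" and "T \<subseteq> X"
  shows "up X le S = up X le T \<longleftrightarrow> (\<forall>c. upset X le c \<longrightarrow> (S \<subseteq> c \<longleftrightarrow> T \<subseteq> c))"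
  unfolding set_eq_subset up_subset_up_iff[OF assms] up_subset_up_iff[OF assms(1,2,4,3)] by blast

lemma cumulative_iff_up_eq:
  fixes F :: "'w set \<Rightarrow> 'w set"
  assumes refl: "reflp_on X le" and trans: "transp_on X le"
    and F_sub: "\<And>a. upset X le a \<Longrightarrow> F a \<subseteq> a"
  shows "(\<forall>a b c. upset X le a \<longrightarrow> upset X le b \<longrightarrow> upset X le c \<longrightarrow> F a \<subseteq> b \<longrightarrow>
            (F (a \<inter> b) \<subseteq> c \<longleftrightarrow> F a \<subseteq> c)) \<longleftrightarrow>
         (\<forall>a b. upset X le a \<longrightarrow> upset X le b \<longrightarrow> F a \<subseteq> b \<and> b \<subseteq> a \<longrightarrow>
            up X le (F a) = up X le (F b))"
    (is "?cumulative \<longleftrightarrow> ?up_eq")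
proof -
  have F_X: "F a \<subseteq> X" if "upset X le a" for a
    using F_sub[OF that] upset_subset[OF that] by blast
  have up_eq_Int_iff: "up X le (F a) = up X le (F (a \<inter> b)) \<longleftrightarrow>
      (\<forall>c. upset X le c \<longrightarrow> (F (a \<inter> b) \<subseteq> c \<longleftrightarrow> F a \<subseteq> c))"
    if "upset X le a" "upset X le b" for a b
    using up_eq_iff[OF refl trans F_X F_X] that upset_Int by blast
  show ?thesis
  proof
    assume ?cumulative
    show ?up_eq
    proof (intro allI impI)
      fix a b assume a: "upset X le a" and b: "upset X le b" and "F a \<subseteq> b \<and> b \<subseteq> a"
      then have "a \<inter> b = b" by blast
      with \<open>?cumulative\<close> \<open>F a \<subseteq> b \<and> b \<subseteq> a\<close> show "up X le (F a) = up X le (F b)"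
        using up_eq_Int_iff[OF a b] a b by metis
    qed
  next
    assume ?up_eq
    show ?cumulative
    proof (intro allI impI)
      fix a b c assume a: "upset X le a" and b: "upset X le b" and "upset X le c" "F a \<subseteq> b"
      then have "F a \<subseteq> a \<inter> b" using F_sub by blast
      with \<open>?up_eq\<close> have "up X le (F a) = up X le (F (a \<inter> b))"
        using a b upset_Int by blast
      then show "F (a \<inter> b) \<subseteq> c \<longleftrightarrow> F a \<subseteq> c"
        using up_eq_Int_iff[OF a b] \<open>upset X le c\<close> by blast
    qed
  qed
qed

lemma sat_persistent:
  assumes cf: "cond_frame X le R" and V: "valuation X le V"
  shows "x \<in> X \<Longrightarrow> y \<in> X \<Longrightarrow> le x y \<Longrightarrow> sat X le R V f x \<Longrightarrow> sat X le R V f y"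
proof (induction f arbitrary: x y)
  case (Var n)
  from V have "upset X le (V n)" ..
  with Var.prems show ?case unfolding upset_def by simp
next
  case (Imp f g)
  have "le x z" if "z \<in> X" "le y z" for z
    using transp_onD[OF cond_frame_transp_on[OF cf]] Imp.prems(1-3) that by blast
  with Imp.prems(4) show ?case by simp
next
  case (Cond f g)
  let ?A = "truth_set X le R V f"
  have A: "upset X le ?A" unfolding upset_def using Cond.IH(1) by blast
  show ?case unfolding sat.simps
  proof (intro allI impI)
    fix z assume z: "(y, z) \<in> R ?A"
    obtain w where w: "(x, w) \<in> R ?A" "le w z"
      using cond_frame_R_back[OF cf A \<open>x \<in> X\<close> \<open>le x y\<close> z] by blast
    then have "sat X le R V g w" using Cond.prems(4) by simp
    then show "sat X le R V g z"
      using Cond.IH(2) w cond_frame_R_subset[OF cf A] z by blast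
  qed
qed fastforce+

lemma upset_truth_set:
  assumes "cond_frame X le R" and "valuation X le V"
  shows "upset X le (truth_set X le R V f)"
  unfolding upset_def using sat_persistent[OF assms] by blast

lemma sat_subst:
  assumes cf: "cond_frame X le R" and V: "valuation X le V"
  shows "x \<in> X \<Longrightarrow> sat X le R V (subst s f) x \<longleftrightarrow> sat X le R (\<lambda>n. truth_set X le R V (s n)) f x"
proof (induction f arbitrary: x)
  case (Cond f g)
  let ?W = "\<lambda>n. truth_set X le R V (s n)"
  have W: "valuation X le ?W" using upset_truth_set[OF cf V] by blast
  have "truth_set X le R V (subst s f) = truth_set X le R ?W f"
    using Cond.IH(1) by blast
  moreover have "R (truth_set X le R ?W f) \<subseteq> X \<times> X"
    using cond_frame_R_subset[OF cf upset_truth_set[OF cf W]] .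
  ultimately show ?case using Cond.IH(2) by auto
qed simp_all

lemma frame_validD:
  "frame_valid X le R f \<Longrightarrow> valuation X le V \<Longrightarrow> x \<in> X \<Longrightarrow> sat X le R V f x"
  unfolding frame_valid_def by blast

lemma frame_valid_subst:
  assumes cf: "cond_frame X le R" and valid: "frame_valid X le R f"
  shows "frame_valid X le R (subst s f)"
  unfolding frame_valid_def
proof (intro allI impI ballI)
  fix V x assume V: "valuation X le V" and x: "x \<in> X"
  have "valuation X le (\<lambda>n. truth_set X le R V (s n))" using upset_truth_set[OF cf V] by blast
  from frame_validD[OF valid this x] show "sat X le R V (subst s f) x" using sat_subst[OF cf V x] by blast
qed

lemma truth_set_eq_if_frame_valid_Iff:
  assumes "cond_frame X le R" and "frame_valid X le R (Iff f g)" and "valuation X le V"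
  shows "truth_set X le R V f = truth_set X le R V g"
proof -
  have "sat X le R V f x \<longleftrightarrow> sat X le R V g x" if "x \<in> X" for x
    using that frame_validD[OF assms(2,3) that] reflp_onD[OF cond_frame_reflp_on[OF assms(1)] that]
    unfolding Iff_def by (simp; blast)
  then show ?thesis by blast
qed

lemma frame_valid_Iff_if_truth_set_eq:
  assumes "\<And>V. valuation X le V \<Longrightarrow> truth_set X le R V f = truth_set X le R V g"
  shows "frame_valid X le R (Iff f g)"
  unfolding frame_valid_def Iff_def using assms by auto

lemma ipc_axiom_sat:
  assumes cf: "cond_frame X le R" and V: "valuation X le V"
  shows "ipc_axiom f \<Longrightarrow> x \<in> X \<Longrightarrow> sat X le R V f x"
proof -
  note persistent = sat_persistent[OF cf V]
    and trans_le = transp_onD[OF cond_frame_transp_on[OF cf]]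
    and refl_le = reflp_onD[OF cond_frame_reflp_on[OF cf]]
  show "ipc_axiom f \<Longrightarrow> x \<in> X \<Longrightarrow> sat X le R V f x"
  proof (induction f arbitrary: x rule: ipc_axiom.induct)
    case 1 then show ?case by (simp; meson persistent trans_le)
  next
    case 2 then show ?case by (simp; meson persistent trans_le refl_le)
  next
    case 5 then show ?case by (simp; meson persistent trans_le)
  next
    case 8 then show ?case by (simp; meson persistent trans_le refl_le)
  qed simp_all
qed

lemma frame_valid_ICK:
  assumes cf: "cond_frame X le R" and G: "\<forall>g\<in>G. frame_valid X le R g"
  shows "f \<in> ICK G \<Longrightarrow> frame_valid X le R f"
proof (induction f rule: ICK.induct)
  case (ipc f)
  then show ?case unfolding frame_valid_def using ipc_axiom_sat[OF cf] by blast
next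
  case (extra f)
  then show ?case using G by blast
next
  case conj_ax
  show ?case by (rule frame_valid_Iff_if_truth_set_eq) auto
next
  case top_ax
  show ?case by (rule frame_valid_Iff_if_truth_set_eq) (simp add: Top_def)
next
  case (us f s)
  then show ?case using frame_valid_subst[OF cf] by blast
next
  case (mp f g)
  show ?case unfolding frame_valid_def
  proof (intro allI impI ballI)
    fix V x assume V: "valuation X le V" and x: "x \<in> X"
    show "sat X le R V g x"
      using frame_validD[OF mp.IH(1) V x] frame_validD[OF mp.IH(2) V x] x
        reflp_onD[OF cond_frame_reflp_on[OF cf] x] by simp
  qed
next
  case (cong_l f g h)
  show ?case
    by (rule frame_valid_Iff_if_truth_set_eq)
      (simp add: truth_set_eq_if_frame_valid_Iff[OF cf cong_l.IH])
next
  case (cong_r f g h)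
  show ?case
  proof (rule frame_valid_Iff_if_truth_set_eq)
    fix V assume V: "valuation X le V"
    have "R (truth_set X le R V h) \<subseteq> X \<times> X"
      using cond_frame_R_subset[OF cf upset_truth_set[OF cf V]] .
    with truth_set_eq_if_frame_valid_Iff[OF cf cong_r.IH V]
    show "truth_set X le R V (Cond h f) = truth_set X le R V (Cond h g)" by auto
  qed
qed

lemma validates_ICK_iff:
  "cond_frame X le R \<Longrightarrow> validates X le R (ICK G) \<longleftrightarrow> (\<forall>g\<in>G. frame_valid X le R g)"
  unfolding validates_def using frame_valid_ICK ICK.extra by blast

lemma truth_set_Var: "upset X le (V n) \<Longrightarrow> truth_set X le R V (Var n) = V n"
  using upset_subset by fastforce

(* Stated for the unfolded truth set of And, since the simplifier unfolds sat first. *)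
lemma Collect_sat_conj:
  "{z \<in> X. sat X le R V f z \<and> sat X le R V g z} = truth_set X le R V f \<inter> truth_set X le R V g"
  by auto

lemma sat_Cond_iff:
  assumes "cond_frame X le R" and "valuation X le V"
  shows "sat X le R V (Cond f g) x \<longleftrightarrow> R (truth_set X le R V f) `` {x} \<subseteq> truth_set X le R V g"
  using cond_frame_R_subset[OF assms(1) upset_truth_set[OF assms]] by auto

lemma frame_valid_Cond_id_iff:
  assumes cf: "cond_frame X le R"
  shows "frame_valid X le R (Cond pP pP) \<longleftrightarrow> (\<forall>x\<in>X. \<forall>a. upset X le a \<longrightarrow> R a `` {x} \<subseteq> a)"
proof -
  have "sat X le R V (Cond pP pP) x \<longleftrightarrow> R (V 0) `` {x} \<subseteq> V 0" if "valuation X le V" for V x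
    using that by (simp only: sat_Cond_iff[OF cf that] truth_set_Var)
  then show ?thesis unfolding frame_valid_def by fastforce
qed

lemma frame_valid_Imp_iff:
  assumes "cond_frame X le R"
  shows "frame_valid X le R (Imp f g) \<longleftrightarrow>
    (\<forall>V. valuation X le V \<longrightarrow> (\<forall>x\<in>X. sat X le R V f x \<longrightarrow> sat X le R V g x))"
  unfolding frame_valid_def sat.simps using reflp_onD[OF cond_frame_reflp_on[OF assms]] by blast

lemma frame_valid_Imp_iff_upsets:
  assumes cf: "cond_frame X le R"
    and f: "\<And>V x. valuation X le V \<Longrightarrow> x \<in> X \<Longrightarrow> sat X le R V f x \<longleftrightarrow> P (V 0) (V 1) (V 2) x"
    and g: "\<And>V x. valuation X le V \<Longrightarrow> x \<in> X \<Longrightarrow> sat X le R V g x \<longleftrightarrow> Q (V 0) (V 1) (V 2) x"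
  shows "frame_valid X le R (Imp f g) \<longleftrightarrow>
    (\<forall>x\<in>X. \<forall>a b c. upset X le a \<longrightarrow> upset X le b \<longrightarrow> upset X le c \<longrightarrow> P a b c x \<longrightarrow> Q a b c x)"
  unfolding frame_valid_Imp_iff[OF cf]
proof (intro iffI ballI allI impI)
  fix x a b c
  assume valid: "\<forall>V. valuation X le V \<longrightarrow> (\<forall>x\<in>X. sat X le R V f x \<longrightarrow> sat X le R V g x)"
    and "x \<in> X" "upset X le a" "upset X le b" "upset X le c" "P a b c x"
  moreover define V :: "nat \<Rightarrow> _" where "V = (\<lambda>n. if n = 0 then a else if n = 1 then b else c)"
  ultimately have "valuation X le V" "V 0 = a" "V 1 = b" "V 2 = c" by simp_all
  with valid f g \<open>x \<in> X\<close> \<open>P a b c x\<close> show "Q a b c x" by metis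
next
  fix V x
  assume "\<forall>x\<in>X. \<forall>a b c. upset X le a \<longrightarrow> upset X le b \<longrightarrow> upset X le c \<longrightarrow> P a b c x \<longrightarrow> Q a b c x"
    and "valuation X le V" "x \<in> X" "sat X le R V f x"
  with f g show "sat X le R V g x" by blast
qed

lemma frame_valid_cut_iff:
  assumes cf: "cond_frame X le R"
  shows "frame_valid X le R (Imp (And (Cond pP pQ) (Cond (And pP pQ) pR)) (Cond pP pR)) \<longleftrightarrow>
    (\<forall>x\<in>X. \<forall>a b c. upset X le a \<longrightarrow> upset X le b \<longrightarrow> upset X le c \<longrightarrow>
       R a `` {x} \<subseteq> b \<and> R (a \<inter> b) `` {x} \<subseteq> c \<longrightarrow> R a `` {x} \<subseteq> c)"
  by (rule frame_valid_Imp_iff_upsets[OF cf])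
    (simp_all only: sat_Cond_iff[OF cf] Collect_sat_conj truth_set_Var simp_thms sat.simps(3))

lemma frame_valid_cm_iff:
  assumes cf: "cond_frame X le R"
  shows "frame_valid X le R (Imp (And (Cond pP pQ) (Cond pP pR)) (Cond (And pP pQ) pR)) \<longleftrightarrow>
    (\<forall>x\<in>X. \<forall>a b c. upset X le a \<longrightarrow> upset X le b \<longrightarrow> upset X le c \<longrightarrow>
       R a `` {x} \<subseteq> b \<and> R a `` {x} \<subseteq> c \<longrightarrow> R (a \<inter> b) `` {x} \<subseteq> c)"
  by (rule frame_valid_Imp_iff_upsets[OF cf])
    (simp_all only: sat_Cond_iff[OF cf] Collect_sat_conj truth_set_Var simp_thms sat.simps(3))

lemma identity_cumulativity_iff_up_eq:
  assumes reflp: "reflp_on X le" and transp: "transp_on X le"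
  shows "(\<forall>x\<in>X. \<forall>a. upset X le a \<longrightarrow> R a `` {x} \<subseteq> a) \<and>
    (\<forall>x\<in>X. \<forall>a b c. upset X le a \<longrightarrow> upset X le b \<longrightarrow> upset X le c \<longrightarrow>
       R a `` {x} \<subseteq> b \<and> R (a \<inter> b) `` {x} \<subseteq> c \<longrightarrow> R a `` {x} \<subseteq> c) \<and>
    (\<forall>x\<in>X. \<forall>a b c. upset X le a \<longrightarrow> upset X le b \<longrightarrow> upset X le c \<longrightarrow>
       R a `` {x} \<subseteq> b \<and> R a `` {x} \<subseteq> c \<longrightarrow> R (a \<inter> b) `` {x} \<subseteq> c) \<longleftrightarrow>
    (\<forall>x\<in>X. \<forall>a b. upset X le a \<longrightarrow> upset X le b \<longrightarrow>
       R a `` {x} \<subseteq> a \<and>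
       (R a `` {x} \<subseteq> b \<and> b \<subseteq> a \<longrightarrow> up X le (R a `` {x}) = up X le (R b `` {x})))"
    (is "?identity_cut_cm \<longleftrightarrow> ?frame_condition")
proof -
  have "?identity_cut_cm \<longleftrightarrow>
      (\<forall>x\<in>X. (\<forall>a. upset X le a \<longrightarrow> R a `` {x} \<subseteq> a) \<and>
        (\<forall>a b c. upset X le a \<longrightarrow> upset X le b \<longrightarrow> upset X le c \<longrightarrow> R a `` {x} \<subseteq> b \<longrightarrow>
           (R (a \<inter> b) `` {x} \<subseteq> c \<longleftrightarrow> R a `` {x} \<subseteq> c)))"
    (is "_ \<longleftrightarrow> (\<forall>x\<in>X. _ \<and> ?cumulative x)")
    unfolding ball_conj_distrib[symmetric] by (rule ball_cong[OF refl]) blast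
  also have "\<dots> \<longleftrightarrow>
      (\<forall>x\<in>X. (\<forall>a. upset X le a \<longrightarrow> R a `` {x} \<subseteq> a) \<and>
        (\<forall>a b. upset X le a \<longrightarrow> upset X le b \<longrightarrow> R a `` {x} \<subseteq> b \<and> b \<subseteq> a \<longrightarrow>
           up X le (R a `` {x}) = up X le (R b `` {x})))"
  proof (intro ball_cong refl conj_cong)
    fix x assume "\<forall>a. upset X le a \<longrightarrow> R a `` {x} \<subseteq> a"
    then show "?cumulative x \<longleftrightarrow>
        (\<forall>a b. upset X le a \<longrightarrow> upset X le b \<longrightarrow> R a `` {x} \<subseteq> b \<and> b \<subseteq> a \<longrightarrow>
           up X le (R a `` {x}) = up X le (R b `` {x}))"
      using cumulative_iff_up_eq[OF reflp transp, of "\<lambda>a. R a `` {x}"] by blast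
  qed
  also have "\<dots> \<longleftrightarrow> ?frame_condition" by blast
  finally show ?thesis .
qed

theorem lemma6p1:
  assumes "cond_frame X le R"
  shows "validates X le R iCC \<longleftrightarrow>
    (\<forall>x\<in>X. \<forall>a b. upset X le a \<longrightarrow> upset X le b \<longrightarrow>
        R a `` {x} \<subseteq> a \<and>
        (R a `` {x} \<subseteq> b \<and> b \<subseteq> a \<longrightarrow> up X le (R a `` {x}) = up X le (R b `` {x})))"
proof -
  have "validates X le R iCC \<longleftrightarrow>
      frame_valid X le R (Cond pP pP) \<and>
      frame_valid X le R (Imp (And (Cond pP pQ) (Cond (And pP pQ) pR)) (Cond pP pR)) \<and>
      frame_valid X le R (Imp (And (Cond pP pQ) (Cond pP pR)) (Cond (And pP pQ) pR))"
    by (simp only: iCC_def validates_ICK_iff[OF assms] iCC_axioms_def ball_simps simp_thms)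
  then show ?thesis
    unfolding frame_valid_Cond_id_iff[OF assms] frame_valid_cut_iff[OF assms] frame_valid_cm_iff[OF assms]
    using identity_cumulativity_iff_up_eq[OF cond_frame_reflp_on[OF assms] cond_frame_transp_on[OF assms]]
    by (rule trans)
qed

end
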